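(* Let $P=\operatorname{conv}(W(\Lambda))$ be a full-dimensional non-degenerate $W$-symmetric polytope and $K\subseteq S$. (1) $P$ is simple if and only if the polytope $P/W_K=P\cap C_K$ is simple. (2) If $P$ is flag, then so is $P/W_K$.
   Context: $V$ is a real Euclidean space of dimension $n$, $R$ a reduced root system spanning $V$ with simple system $S=\{\alpha_1,\dots,\alpha_n\}$, $W$ its Weyl group generated by the simple reflections, $W_K$ the parabolic subgroup generated by reflections in the roots of $K$. $C_K=\{x:\langle x,\alpha_k\rangle\ge0\ \forall \alpha_k\in K\}$; $\Lambda\subset C_S$ finite. Non-degenerate: no vertex of $P$ lies on the boundary of $C_S$. A polytope is simple if each vertex lies in exactly $n$ facets; flag if any collection of facets in which every two facets intersect has non-empty total intersection. *)

theory Defs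
  imports "HOL-Analysis.Analysis"
begin

definition refl :: "'a::euclidean_space \<Rightarrow> 'a \<Rightarrow> 'a" where
  "refl a x = x - ((2 * (x \<bullet> a)) / (a \<bullet> a)) *\<^sub>R a"

definition root_system :: "'a::euclidean_space set \<Rightarrow> bool" where
  "root_system R \<longleftrightarrow> finite R \<and> 0 \<notin> R \<and> span R = UNIV
     \<and> (\<forall>a\<in>R. \<forall>b\<in>R. refl a b \<in> R)
     \<and> (\<forall>a\<in>R. \<forall>b\<in>R. \<exists>k::int. 2 * (b \<bullet> a) / (a \<bullet> a) = of_int k)
     \<and> (\<forall>a\<in>R. \<forall>c::real. c *\<^sub>R a \<in> R \<longrightarrow> c = 1 \<or> c = -1)"

definition simple_system :: "'a::euclidean_space set \<Rightarrow> 'a set \<Rightarrow> bool" where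
  "simple_system R S \<longleftrightarrow> S \<subseteq> R \<and> independent S
     \<and> (\<forall>b\<in>R. \<exists>c. b = (\<Sum>a\<in>S. c a *\<^sub>R a)
                 \<and> ((\<forall>a\<in>S. c a \<ge> 0) \<or> (\<forall>a\<in>S. c a \<le> 0)))"

text \<open>The group of maps generated by a set of (involutive) maps.\<close>
inductive_set gen_group :: "('a \<Rightarrow> 'a) set \<Rightarrow> ('a \<Rightarrow> 'a) set" for G where
  gen_id: "id \<in> gen_group G"
| gen_step: "f \<in> gen_group G \<Longrightarrow> g \<in> G \<Longrightarrow> g \<circ> f \<in> gen_group G"

text \<open>Parabolic subgroup W_K generated by the reflections in roots of K
  (W = W_S is the Weyl group).\<close>
definition parabolic :: "'a::euclidean_space set \<Rightarrow> ('a \<Rightarrow> 'a) set" where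
  "parabolic K = gen_group (refl ` K)"

definition chamber :: "'a::euclidean_space set \<Rightarrow> 'a set" where
  "chamber K = {x. \<forall>a\<in>K. x \<bullet> a \<ge> 0}"

definition W_polytope :: "'a::euclidean_space set \<Rightarrow> 'a set \<Rightarrow> 'a set" where
  "W_polytope S \<Lambda> = convex hull {w x | w x. w \<in> parabolic S \<and> x \<in> \<Lambda>}"

definition simple_polytope :: "'a::euclidean_space set \<Rightarrow> bool" where
  "simple_polytope P \<longleftrightarrow> polytope P \<and>
     (\<forall>v. v extreme_point_of P \<longrightarrow> card {F. F facet_of P \<and> v \<in> F} = DIM('a))"

definition flag_polytope :: "'a::euclidean_space set \<Rightarrow> bool" where
  "flag_polytope P \<longleftrightarrow> polytope P \<and>
     (\<forall>\<F>. \<F> \<subseteq> {F. F facet_of P} \<and> (\<forall>F\<in>\<F>. \<forall>G\<in>\<F>. F \<inter> G \<noteq> {})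
            \<longrightarrow> \<Inter>\<F> \<noteq> {})"

end

theory Submission
  imports Defs
begin

text \<open>
  Every vertex of P is W-conjugate to one in the interior of C_S, where P and P \<inter> C_K agree
  locally; as W permutes the facets of P, simplicity of P \<inter> C_K gives that of P. Conversely, near
  a vertex v of P \<inter> C_K this polytope coincides with the cone cut out by the facet normals of P
  at v and by the simple roots of K orthogonal to v. A hyperplane supporting P at a point of the wall of a simple
  root \<alpha> is orthogonal to \<alpha>: its mirror image supports P at the same point, and a vertex of the
  common face would otherwise lie on the wall, which nondegeneracy forbids. Hence for simple P
  these normals form a basis of the space.

  For flagness, each facet of P \<inter> C_K is cut out by a facet of P or by a wall. The facets of P
  underlying a pairwise intersecting family meet in a face E. Maximising a height functional \<rho>
  (with \<rho> \<bullet> \<alpha> = 1 on simple roots) over E yields a point of C_K, since the facet normals are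
  dominant and so reflections keep E; minimising \<rho> over E \<inter> C_K then yields a point on every
  wall of the family, by obtuseness of the simple roots.
\<close>

section \<open>Reflections and parabolic subgroups\<close>

lemma linear_refl: "linear (refl a)"
proof (rule linearI)
  fix x y show "refl a (x + y) = refl a x + refl a y"
    unfolding refl_def inner_add_left add_divide_distrib distrib_left scaleR_add_left by simp
next
  fix c x show "refl a (c *\<^sub>R x) = c *\<^sub>R refl a x"
    unfolding refl_def by (simp add: scaleR_diff_right)
qed

lemma refl_fixes_orthogonal: "x \<bullet> a = 0 \<Longrightarrow> refl a x = x"
  by (simp add: refl_def)

lemma inner_refl_left: "refl a x \<bullet> y = x \<bullet> y - (2 * (x \<bullet> a) / (a \<bullet> a)) * (a \<bullet> y)"
  unfolding refl_def inner_diff_left inner_scaleR_left ..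

lemma inner_refl_right: "y \<bullet> refl a x = y \<bullet> x - (2 * (x \<bullet> a) / (a \<bullet> a)) * (a \<bullet> y)"
  using inner_refl_left[of a x y] by (simp add: inner_commute)

lemma refl_refl [simp]: "refl a (refl a x) = x"
  by (cases "a = 0") (simp_all add: refl_def inner_diff_left algebra_simps)

lemma inner_refl_swap: "refl a x \<bullet> y = x \<bullet> refl a y"
  by (simp add: inner_refl_left inner_refl_right inner_commute)

lemma inner_refl_refl [simp]: "refl a x \<bullet> refl a y = x \<bullet> y"
  by (simp add: inner_refl_swap)

lemma gen_group_base: "g \<in> G \<Longrightarrow> g \<in> gen_group G"
  using gen_group.gen_step[OF gen_group.gen_id, of g G] by simp

lemma gen_group_comp:
  assumes "f \<in> gen_group G" "f' \<in> gen_group G" shows "f \<circ> f' \<in> gen_group G"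
  using assms(1)
proof (induction f rule: gen_group.induct)
  case gen_id then show ?case using assms(2) by simp
next
  case (gen_step f g)
  then show ?case using gen_group.gen_step by (metis comp_assoc)
qed

lemma id_in_parabolic: "id \<in> parabolic K"
  unfolding parabolic_def by (rule gen_group.gen_id)

lemma refl_in_parabolic: "a \<in> K \<Longrightarrow> refl a \<in> parabolic K"
  unfolding parabolic_def by (rule gen_group_base) auto

lemma parabolic_comp: "w \<in> parabolic K \<Longrightarrow> w' \<in> parabolic K \<Longrightarrow> w \<circ> w' \<in> parabolic K"
  unfolding parabolic_def by (rule gen_group_comp)

lemma parabolic_induct [consumes 1, case_names id step]:
  assumes "w \<in> parabolic K" "P id"
    and "\<And>f a. f \<in> parabolic K \<Longrightarrow> P f \<Longrightarrow> a \<in> K \<Longrightarrow> P (refl a \<circ> f)"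
  shows "P w"
  using assms(1) unfolding parabolic_def
proof (induction w rule: gen_group.induct)
  case gen_id then show ?case by (rule assms(2))
next
  case (gen_step f g)
  then obtain a where "a \<in> K" "g = refl a" by blast
  then show ?case using assms(3)[of f a] gen_step by (simp only: parabolic_def)
qed

lemma linear_parabolic: "w \<in> parabolic K \<Longrightarrow> linear w"
proof (induction rule: parabolic_induct)
  case (step f a) then show ?case using linear_compose linear_refl by blast
qed (rule linear_id)

lemma parabolic_inner [simp]: "w \<in> parabolic K \<Longrightarrow> w x \<bullet> w y = x \<bullet> y"
  by (induction arbitrary: x y rule: parabolic_induct) simp_all

lemma inj_parabolic:
  assumes "w \<in> parabolic K" shows "inj w"
proof (rule injI)
  fix x y assume "w x = w y"
  then have "w (x - y) = 0" using linear_parabolic[OF assms] by (simp add: linear_diff)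
  then have "(x - y) \<bullet> (x - y) = 0" using parabolic_inner[OF assms, of "x - y" "x - y"] by simp
  then show "x = y" by simp
qed

lemma parabolic_inverse:
  assumes "w \<in> parabolic K" shows "\<exists>w'\<in>parabolic K. w' \<circ> w = id \<and> w \<circ> w' = id"
  using assms
proof (induction rule: parabolic_induct)
  case id show ?case by (rule bexI[OF _ id_in_parabolic]) simp
next
  case (step f a)
  then obtain f' where f': "f' \<in> parabolic K" "f' \<circ> f = id" "f \<circ> f' = id" by blast
  have "(f' \<circ> refl a) \<circ> (refl a \<circ> f) = id" "(refl a \<circ> f) \<circ> (f' \<circ> refl a) = id"
    using fun_cong[OF f'(2)] fun_cong[OF f'(3)] by (auto simp: fun_eq_iff)
  moreover have "f' \<circ> refl a \<in> parabolic K"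
    using f'(1) step parabolic_comp refl_in_parabolic by blast
  ultimately show ?case by blast
qed

lemma parabolic_root_closed:
  assumes "root_system R" "K \<subseteq> R" "w \<in> parabolic K" "b \<in> R"
  shows "w b \<in> R"
  using assms(3,4)
  by (induction arbitrary: b rule: parabolic_induct)
     (use assms(1,2) in \<open>auto simp: root_system_def\<close>)

section \<open>Linear algebra\<close>

lemma independent_exists_inner_eq:
  fixes B :: "'a::euclidean_space set"
  assumes "independent B" obtains d where "\<And>x. x \<in> B \<Longrightarrow> d \<bullet> x = f x"
proof -
  obtain g :: "'a \<Rightarrow> real" where g: "linear g" "\<And>x. x \<in> B \<Longrightarrow> g x = f x"
    using linear_independent_extend[OF assms] by blast
  have "adjoint g 1 \<bullet> x = g x" for x
    using adjoint_works[OF g(1), of x 1] by (simp add: inner_commute)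
  then show ?thesis using that[of "adjoint g 1"] g(2) by simp
qed

lemma independent_dual_vectors:
  fixes M :: "'a::euclidean_space set"
  assumes "independent M"
  obtains d where "\<And>m m'. m \<in> M \<Longrightarrow> m' \<in> M \<Longrightarrow> d m \<bullet> m' = (if m' = m then 1 else 0)"
proof -
  have "\<forall>m\<in>M. \<exists>d. \<forall>m'\<in>M. d \<bullet> m' = (if m' = m then 1 else 0)"
  proof
    fix m
    obtain d where "\<And>m'. m' \<in> M \<Longrightarrow> d \<bullet> m' = (if m' = m then 1 else 0)"
      using independent_exists_inner_eq[OF assms, of "\<lambda>m'. if m' = m then 1 else 0"] by blast
    then show "\<exists>d. \<forall>m'\<in>M. d \<bullet> m' = (if m' = m then 1 else 0)" by blast
  qed
  then obtain d where "\<forall>m\<in>M. \<forall>m'\<in>M. d m \<bullet> m' = (if m' = m then 1 else 0)"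
    by (rule bchoice[THEN exE]) blast
  then show ?thesis using that by blast
qed

lemma independent_Un_orthogonal:
  fixes A B :: "'a::euclidean_space set"
  assumes A: "independent A" and B: "independent B"
    and orth: "\<And>x y. x \<in> A \<Longrightarrow> y \<in> B \<Longrightarrow> x \<bullet> y = 0"
  shows "independent (A \<union> B)"
proof -
  have fin: "finite A" "finite B" using A B finiteI_independent by blast+
  have "A \<inter> B = {}" using orth A dependent_zero by (metis disjoint_iff inner_eq_zero_iff)
  then have "card (A \<union> B) = dim (A \<union> B)"
    using dim_orthogonal_sum[OF orth] fin A B by (simp add: card_Un_disjoint dim_eq_card_independent)
  then show ?thesis using card_eq_dim[of "A \<union> B" "A \<union> B"] fin span_superset by blast
qed

lemma hyperplane_subset_imp_proportional:
  fixes a a' :: "'a::euclidean_space"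
  assumes "a \<noteq> 0" "{x. a \<bullet> x = b} \<subseteq> {x. a' \<bullet> x = b'}"
  obtains l where "a' = l *\<^sub>R a" "b' = l * b"
proof -
  define x0 where "x0 = (b / (a \<bullet> a)) *\<^sub>R a"
  define l where "l = (a' \<bullet> a) / (a \<bullet> a)"
  define d where "d = a' - l *\<^sub>R a"
  have aa: "a \<bullet> a \<noteq> 0" using assms(1) by simp
  have x0: "a \<bullet> x0 = b" and ad: "a \<bullet> d = 0"
    using aa by (simp_all add: x0_def d_def l_def inner_diff_right inner_commute)
  then have "a \<bullet> (x0 + d) = b" by (simp add: inner_add_right)
  then have "a' \<bullet> x0 = b'" "a' \<bullet> (x0 + d) = b'" using x0 assms(2) by blast+
  then have "a' \<bullet> d = 0" by (simp add: inner_add_right)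
  then have "d \<bullet> d = 0" using ad by (simp add: d_def inner_diff_left inner_commute)
  then have a': "a' = l *\<^sub>R a" by (simp add: d_def)
  then have "b' = l * b" using \<open>a' \<bullet> x0 = b'\<close> x0 by simp
  then show ?thesis using that a' by blast
qed

section \<open>Local facial structure of polyhedra\<close>

lemma eventually_mem_iff_obtain_ball:
  assumes "\<forall>\<^sub>F x in nhds v. x \<in> X \<longleftrightarrow> x \<in> Y"
  obtains e where "e > 0" "X \<inter> ball v e = Y \<inter> ball v e"
proof -
  obtain e where "e > 0" "\<forall>x. dist x v < e \<longrightarrow> (x \<in> X \<longleftrightarrow> x \<in> Y)"
    using assms unfolding eventually_nhds_metric by blast
  then have "X \<inter> ball v e = Y \<inter> ball v e" by (auto simp: dist_commute)
  then show ?thesis using that \<open>e > 0\<close> by blast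
qed

lemma convex_segment_point_near:
  fixes v p :: "'a::real_normed_vector"
  assumes "convex X" "v \<in> X" "p \<in> X" "e > 0"
  obtains t where "0 < t" "t < 1" "v + t *\<^sub>R (p - v) \<in> X \<inter> ball v e"
proof -
  define t where "t = min (1/2) (e / (2 * (norm (p - v) + 1)))"
  have n: "0 < norm (p - v) + 1" by (simp add: add_nonneg_pos)
  then have c: "0 < e / (2 * (norm (p - v) + 1))" using assms(4) by simp
  then have t: "0 < t" "t < 1" by (simp_all add: t_def)
  have "t * norm (p - v) \<le> e / (2 * (norm (p - v) + 1)) * (norm (p - v) + 1)"
    using c by (intro mult_mono) (auto simp: t_def)
  also have "\<dots> = e / 2" using n by (simp add: field_simps)
  also have "\<dots> < e" using assms(4) by simp
  finally have "v + t *\<^sub>R (p - v) \<in> ball v e" using t by (simp add: dist_norm)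
  moreover have "v + t *\<^sub>R (p - v) = (1 - t) *\<^sub>R v + t *\<^sub>R p" by (simp add: algebra_simps)
  then have "v + t *\<^sub>R (p - v) \<in> X" using assms(1-3) t convexD by fastforce
  ultimately show ?thesis using that t by blast
qed

lemma face_subset_if_subset_near:
  fixes F G :: "'a::euclidean_space set"
  assumes "F face_of X" "G face_of X" "v \<in> F" "v \<in> G" "e > 0" "F \<inter> ball v e \<subseteq> G"
  shows "F \<subseteq> G"
proof
  fix p assume p: "p \<in> F"
  obtain t where t: "0 < t" "t < 1" "v + t *\<^sub>R (p - v) \<in> F \<inter> ball v e"
    using convex_segment_point_near[OF face_of_imp_convex[OF assms(1)] assms(3) p assms(5)] .
  show "p \<in> G"
  proof (cases "p = v")
    case False
    have "v + t *\<^sub>R (p - v) = (1 - t) *\<^sub>R v + t *\<^sub>R p" by (simp add: algebra_simps)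
    then have "v + t *\<^sub>R (p - v) \<in> open_segment v p"
      using t(1,2) False by (auto simp: in_segment)
    moreover have "v \<in> X" "p \<in> X" using assms(1,3) p face_of_imp_subset by blast+
    ultimately show ?thesis using face_ofD[OF assms(2)] t(3) assms(6) by blast
  qed (use assms(4) in simp)
qed

lemma le_if_le_near:
  fixes X :: "'a::euclidean_space set"
  assumes "convex X" "v \<in> X" "e > 0" "\<And>x. x \<in> X \<inter> ball v e \<Longrightarrow> a \<bullet> x \<le> b" "a \<bullet> v = b"
    and "p \<in> X"
  shows "a \<bullet> p \<le> b"
proof -
  obtain t where t: "0 < t" "v + t *\<^sub>R (p - v) \<in> X \<inter> ball v e"
    using convex_segment_point_near[OF assms(1,2,6,3)] by blast
  then have "a \<bullet> (v + t *\<^sub>R (p - v)) \<le> b" using assms(4) by blast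
  then have "t * (a \<bullet> p - b) \<le> 0"
    using assms(5) by (simp add: inner_add_right inner_diff_right algebra_simps)
  then show ?thesis using t(1) by (simp add: mult_le_0_iff)
qed

lemma aff_dim_Int_ball: "convex X \<Longrightarrow> v \<in> X \<Longrightarrow> e > 0 \<Longrightarrow> aff_dim (X \<inter> ball v e) = aff_dim X"
  by (rule aff_dim_convex_Int_open) auto

lemma facet_of_transfer_near:
  fixes X Y :: "'a::euclidean_space set"
  assumes "polyhedron X" "convex Y" "e > 0" "X \<inter> ball v e = Y \<inter> ball v e"
    and "F facet_of X" "v \<in> F"
  obtains F' where "F' facet_of Y" "v \<in> F'" "F' \<inter> ball v e = F \<inter> ball v e"
proof -
  obtain a b where ab: "X \<subseteq> {x. a \<bullet> x \<le> b}" "F = X \<inter> {x. a \<bullet> x = b}"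
    using facet_of_polyhedron[OF assms(1,5)] by blast
  have v: "v \<in> X" "v \<in> Y" "a \<bullet> v = b" using assms(3,4,6) ab(2) by (auto simp: set_eq_iff)
  define F' where "F' = Y \<inter> {x. a \<bullet> x = b}"
  have "a \<bullet> y \<le> b" if "y \<in> Y" for y
    by (rule le_if_le_near[OF assms(2) v(2) assms(3) _ v(3) that]) (use assms(4) ab(1) in blast)
  then have face: "F' face_of Y"
    unfolding F'_def by (rule face_of_Int_supporting_hyperplane_le[OF assms(2)])
  have near: "F' \<inter> ball v e = F \<inter> ball v e"
    using assms(4) ab(2) unfolding F'_def by blast
  have convex: "convex F" "convex F'" "convex X"
    using assms(1,5) face facet_of_imp_face_of face_of_imp_convex polyhedron_imp_convex by blast+
  have "v \<in> F'" using v by (simp add: F'_def)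
  then have "aff_dim F' = aff_dim (F' \<inter> ball v e)"
    using aff_dim_Int_ball[OF convex(2) _ assms(3)] by simp
  also have "\<dots> = aff_dim F" using near aff_dim_Int_ball[OF convex(1) assms(6) assms(3)] by simp
  finally have "aff_dim F' = aff_dim F" .
  moreover have "aff_dim Y = aff_dim X"
    using aff_dim_Int_ball[OF assms(2) v(2) assms(3)] aff_dim_Int_ball[OF convex(3) v(1) assms(3)] assms(4)
    by simp
  ultimately have "F' facet_of Y" using face assms(5) v by (auto simp: facet_of_def F'_def)
  then show ?thesis using that near v by (auto simp: F'_def)
qed

lemma card_facets_through_eq_if_eventually_eq:
  fixes X Y :: "'a::euclidean_space set"
  assumes "polyhedron X" "polyhedron Y" "\<forall>\<^sub>F x in nhds v. x \<in> X \<longleftrightarrow> x \<in> Y"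
  shows "card {F. F facet_of X \<and> v \<in> F} = card {F. F facet_of Y \<and> v \<in> F}"
proof -
  obtain e where e: "e > 0" "X \<inter> ball v e = Y \<inter> ball v e"
    using eventually_mem_iff_obtain_ball[OF assms(3)] .
  define trace where "trace F = F \<inter> ball v e" for F :: "'a set"
  have inj: "inj_on trace {F. F facet_of Z \<and> v \<in> F}" for Z
  proof (rule inj_onI)
    fix F G assume "F \<in> {F. F facet_of Z \<and> v \<in> F}" "G \<in> {F. F facet_of Z \<and> v \<in> F}"
      and eq: "trace F = trace G"
    then have F: "F face_of Z" "v \<in> F" and G: "G face_of Z" "v \<in> G"
      by (auto dest: facet_of_imp_face_of)
    have "F \<subseteq> G" by (rule face_subset_if_subset_near[OF F(1) G(1) F(2) G(2) e(1)])
        (use eq in \<open>auto simp: trace_def\<close>)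
    moreover have "G \<subseteq> F" by (rule face_subset_if_subset_near[OF G(1) F(1) G(2) F(2) e(1)])
        (use eq in \<open>auto simp: trace_def\<close>)
    ultimately show "F = G" by blast
  qed
  have transfer: "trace ` {F. F facet_of Z \<and> v \<in> F} \<subseteq> trace ` {F. F facet_of Z' \<and> v \<in> F}"
    if Z: "polyhedron Z" "polyhedron Z'" "Z \<inter> ball v e = Z' \<inter> ball v e" for Z Z'
  proof
    fix T assume "T \<in> trace ` {F. F facet_of Z \<and> v \<in> F}"
    then obtain F where F: "F facet_of Z" "v \<in> F" "T = trace F" by blast
    obtain F' where "F' facet_of Z'" "v \<in> F'" "F' \<inter> ball v e = F \<inter> ball v e"
      using facet_of_transfer_near[OF Z(1) polyhedron_imp_convex[OF Z(2)] e(1) Z(3) F(1,2)] .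
    then show "T \<in> trace ` {F. F facet_of Z' \<and> v \<in> F}"
      using F(3) by (intro image_eqI[where x = F']) (auto simp: trace_def)
  qed
  have "trace ` {F. F facet_of X \<and> v \<in> F} = trace ` {F. F facet_of Y \<and> v \<in> F}"
    using transfer[OF assms(1,2) e(2)] transfer[OF assms(2,1) e(2)[symmetric]] by blast
  then show ?thesis using card_image[OF inj, of X] card_image[OF inj, of Y] by simp
qed

definition vertex_cone :: "'a::real_inner set \<Rightarrow> 'a \<Rightarrow> 'a set" where
  "vertex_cone M v = {x. \<forall>m\<in>M. m \<bullet> x \<le> m \<bullet> v}"

lemma vertex_cone_Un: "vertex_cone (A \<union> B) v = vertex_cone A v \<inter> vertex_cone B v"
  by (auto simp: vertex_cone_def)

lemma polyhedron_vertex_cone: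
  fixes M :: "'a::euclidean_space set"
  assumes "finite M" shows "polyhedron (vertex_cone M v)"
proof -
  have "vertex_cone M v = \<Inter> ((\<lambda>m. {x. m \<bullet> x \<le> m \<bullet> v}) ` M)" by (auto simp: vertex_cone_def)
  then show ?thesis
    using assms by (auto intro!: polyhedron_Inter simp: polyhedron_halfspace_le)
qed

lemma span_eq_UNIV_if_extreme_point:
  fixes M :: "'a::euclidean_space set"
  assumes "v extreme_point_of X" "\<forall>\<^sub>F x in nhds v. x \<in> X \<longleftrightarrow> x \<in> vertex_cone M v"
  shows "span M = UNIV"
proof (rule ccontr)
  assume "span M \<noteq> UNIV"
  then obtain d where d: "d \<noteq> 0" "span M \<subseteq> {x. d \<bullet> x = 0}"
    using span_not_univ_subset_hyperplane by blast
  obtain e where e: "e > 0" "X \<inter> ball v e = vertex_cone M v \<inter> ball v e"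
    using eventually_mem_iff_obtain_ball[OF assms(2)] .
  define u where "u = (e / (2 * norm d)) *\<^sub>R d"
  have "m \<bullet> u = 0" if "m \<in> M" for m
    using d(2) span_base[OF that] by (auto simp: u_def inner_commute)
  then have "v + u \<in> vertex_cone M v" "v - u \<in> vertex_cone M v"
    by (auto simp: vertex_cone_def inner_add_right inner_diff_right)
  moreover have "v + u \<in> ball v e" "v - u \<in> ball v e"
    using d(1) e(1) by (simp_all add: u_def dist_norm)
  ultimately have "v + u \<in> X" "v - u \<in> X" using e(2) by blast+
  moreover have "u \<noteq> 0" using d(1) e(1) by (simp add: u_def)
  then have "u \<noteq> - u" by (simp add: eq_neg_iff_add_eq_0 flip: scaleR_2)
  then have "v \<in> open_segment (v + u) (v - u)"
    using midpoint_in_open_segment[of "v + u" "v - u"]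
    by (simp add: midpoint_def scaleR_add_right scaleR_diff_right flip: scaleR_add_left)
  ultimately show False using assms(1) unfolding extreme_point_of_def by blast
qed

lemma facet_of_vertex_cone_iff:
  fixes M :: "'a::euclidean_space set"
  assumes "independent M"
  shows "F facet_of vertex_cone M v \<longleftrightarrow> (\<exists>m\<in>M. F = vertex_cone M v \<inter> {x. m \<bullet> x = m \<bullet> v})"
proof -
  obtain d where d: "\<And>m m'. m \<in> M \<Longrightarrow> m' \<in> M \<Longrightarrow> d m \<bullet> m' = (if m' = m then 1 else 0)"
    using independent_dual_vectors[OF assms] by blast
  define T where "T = vertex_cone M v"
  define hs where "hs m = {x. m \<bullet> x \<le> m \<bullet> v}" for m
  have shift: "v + d m \<in> hs m' \<longleftrightarrow> m' \<noteq> m" if "m \<in> M" "m' \<in> M" for m m'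
    using d[OF that] by (simp add: hs_def inner_add_right inner_commute)
  have inj: "inj_on hs M" by (rule inj_onI) (use shift in blast)
  define a where "a = inv_into M hs"
  have a_hs: "a (hs m) = m" if "m \<in> M" for m using inv_into_f_f[OF inj that] by (simp add: a_def)
  have halfspace: "a h \<noteq> 0 \<and> h = {x. a h \<bullet> x \<le> a h \<bullet> v}" if "h \<in> hs ` M" for h
    using that a_hs assms dependent_zero by (fastforce simp: hs_def)
  have T: "T = \<Inter> (hs ` M)" by (auto simp: T_def vertex_cone_def hs_def)
  then have seq: "T = affine hull T \<inter> \<Inter> (hs ` M)" using hull_subset[of T] by blast
  have minimal: "T \<subset> affine hull T \<inter> \<Inter> H'" if H': "H' \<subset> hs ` M" for H'
  proof -
    obtain m where m: "m \<in> M" "hs m \<notin> H'" using H' by blast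
    have "v \<in> T" "v - d m \<in> T"
      using d[OF m(1)] by (auto simp: T_def vertex_cone_def inner_diff_right inner_commute)
    then have "2 *\<^sub>R v + (-1) *\<^sub>R (v - d m) \<in> affine hull T"
      by (intro mem_affine[OF affine_affine_hull] hull_inc) auto
    moreover have "2 *\<^sub>R v + (-1) *\<^sub>R (v - d m) = v + d m" by (simp add: algebra_simps scaleR_2)
    ultimately have "v + d m \<in> affine hull T" by (simp only:)
    moreover have "v + d m \<in> \<Inter> H'" using H' m shift by blast
    moreover have "v + d m \<notin> T" using T shift[OF m(1) m(1)] m(1) by blast
    ultimately have "v + d m \<in> affine hull T \<inter> \<Inter> H' - T" by simp
    moreover have "T \<subseteq> affine hull T \<inter> \<Inter> H'" using seq H' by blast
    ultimately show ?thesis by blast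
  qed
  have "F facet_of T \<longleftrightarrow> (\<exists>h. h \<in> hs ` M \<and> F = T \<inter> {x. a h \<bullet> x = a h \<bullet> v})"
    using assms by (intro facet_of_polyhedron_explicit seq halfspace minimal)
      (auto simp: finiteI_independent)
  then show ?thesis by (auto simp: T_def a_hs)
qed

lemma card_facets_through_vertex_cone:
  fixes M :: "'a::euclidean_space set"
  assumes "independent M"
  shows "card {F. F facet_of vertex_cone M v \<and> v \<in> F} = card M"
proof -
  obtain d where d: "\<And>m m'. m \<in> M \<Longrightarrow> m' \<in> M \<Longrightarrow> d m \<bullet> m' = (if m' = m then 1 else 0)"
    using independent_dual_vectors[OF assms] by blast
  define facet where "facet m = vertex_cone M v \<inter> {x. m \<bullet> x = m \<bullet> v}" for m
  have "{F. F facet_of vertex_cone M v \<and> v \<in> F} = facet ` M"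
    using facet_of_vertex_cone_iff[OF assms] by (auto simp: facet_def vertex_cone_def)
  moreover have "v - d m \<in> facet m' \<longleftrightarrow> m' \<noteq> m" if "m \<in> M" "m' \<in> M" for m m'
    using d that by (auto simp: facet_def vertex_cone_def inner_diff_right inner_commute)
  then have "inj_on facet M" by (intro inj_onI) blast
  ultimately show ?thesis by (simp add: card_image)
qed

lemma eventually_halfspaces_eq_active_cone:
  fixes a :: "'i \<Rightarrow> 'a::euclidean_space"
  assumes "finite I" "\<And>i. i \<in> I \<Longrightarrow> a i \<bullet> v \<le> b i"
  shows "\<forall>\<^sub>F x in nhds v. x \<in> {x. \<forall>i\<in>I. a i \<bullet> x \<le> b i}
           \<longleftrightarrow> x \<in> vertex_cone (a ` {i\<in>I. a i \<bullet> v = b i}) v"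
proof -
  have "\<forall>\<^sub>F x in nhds v. a i \<bullet> v < b i \<longrightarrow> a i \<bullet> x < b i" for i
  proof (cases "a i \<bullet> v < b i")
    case True
    have "((\<lambda>x. a i \<bullet> x) \<longlongrightarrow> a i \<bullet> v) (nhds v)"
      by (intro tendsto_intros filterlim_ident)
    then show ?thesis using order_tendstoD(2)[OF _ True] by (auto elim: eventually_mono)
  qed simp
  then have "\<forall>\<^sub>F x in nhds v. \<forall>i\<in>I. a i \<bullet> v < b i \<longrightarrow> a i \<bullet> x < b i"
    using assms(1) by (simp add: eventually_ball_finite_distrib)
  then show ?thesis
  proof (rule eventually_mono)
    fix x assume "\<forall>i\<in>I. a i \<bullet> v < b i \<longrightarrow> a i \<bullet> x < b i"
    then show "x \<in> {x. \<forall>i\<in>I. a i \<bullet> x \<le> b i} \<longleftrightarrow> x \<in> vertex_cone (a ` {i\<in>I. a i \<bullet> v = b i}) v"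
      using assms(2) by (fastforce simp: vertex_cone_def order.order_iff_strict)
  qed
qed

lemma facet_of_halfspaces_obtain:
  fixes a :: "'i \<Rightarrow> 'a::euclidean_space"
  assumes "finite I" "\<And>i. i \<in> I \<Longrightarrow> a i \<noteq> 0"
    and "aff_dim {x. \<forall>i\<in>I. a i \<bullet> x \<le> b i} = DIM('a)"
    and "F facet_of {x. \<forall>i\<in>I. a i \<bullet> x \<le> b i}"
  obtains i where "i \<in> I" "F = {x. \<forall>i\<in>I. a i \<bullet> x \<le> b i} \<inter> {x. a i \<bullet> x = b i}"
proof -
  define Q where "Q = {x. \<forall>i\<in>I. a i \<bullet> x \<le> b i}"
  define hs where "hs i = {x. a i \<bullet> x \<le> b i}" for i
  have "Q = \<Inter> (hs ` I)" by (auto simp: Q_def hs_def)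
  then obtain \<M> where "\<M> \<subseteq> hs ` I \<and> Q = \<Inter> \<M>"
    and least: "\<forall>\<M>'. \<M>' \<subseteq> hs ` I \<and> Q = \<Inter> \<M>' \<longrightarrow> card \<M> \<le> card \<M>'"
    using ex_has_least_nat[of "\<lambda>\<M>. \<M> \<subseteq> hs ` I \<and> Q = \<Inter> \<M>" "hs ` I" card] by auto
  then have \<M>: "\<M> \<subseteq> hs ` I" "Q = \<Inter> \<M>" by auto
  have fin: "finite \<M>" using finite_subset[OF \<M>(1)] assms(1) by simp
  define idx where "idx = inv_into I hs"
  have idx: "idx h \<in> I" "hs (idx h) = h" if "h \<in> \<M>" for h
    using \<M>(1) that by (auto simp: idx_def inv_into_into f_inv_into_f)
  have aff: "affine hull Q = UNIV" using assms(3) aff_dim_eq_full Q_def by blast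
  have seq: "Q = affine hull Q \<inter> \<Inter> \<M>" using \<M>(2) aff by simp
  have halfspace: "a (idx h) \<noteq> 0 \<and> h = {x. a (idx h) \<bullet> x \<le> b (idx h)}" if "h \<in> \<M>" for h
    using idx[OF that] assms(2) by (auto simp: hs_def)
  have minimal: "Q \<subset> affine hull Q \<inter> \<Inter> \<M>'" if sub: "\<M>' \<subset> \<M>" for \<M>'
  proof -
    have "Q \<noteq> \<Inter> \<M>'"
    proof
      assume "Q = \<Inter> \<M>'"
      then have "card \<M> \<le> card \<M>'" using least sub \<M>(1) by blast
      then show False using psubset_card_mono[OF fin sub] by simp
    qed
    moreover have "Q \<subseteq> \<Inter> \<M>'" using \<M>(2) sub by blast
    ultimately show ?thesis using aff by auto
  qed
  obtain h where "h \<in> \<M>" "F = Q \<inter> {x. a (idx h) \<bullet> x = b (idx h)}"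
    using facet_of_polyhedron_explicit[OF fin seq halfspace minimal] assms(4) Q_def by blast
  then show ?thesis using that idx Q_def by blast
qed

lemma facet_eq_face_if_subset:
  assumes "convex Q" "G facet_of Q" "F face_of Q" "F \<noteq> Q" "G \<subseteq> F"
  shows "G = F"
proof (rule ccontr)
  assume "G \<noteq> F"
  have "G face_of F"
    using face_of_subset[OF facet_of_imp_face_of[OF assms(2)] assms(5) face_of_imp_subset[OF assms(3)]] .
  then have "aff_dim G < aff_dim F"
    using face_of_aff_dim_lt face_of_imp_convex[OF assms(3)] \<open>G \<noteq> F\<close> by blast
  moreover have "aff_dim F < aff_dim Q" using face_of_aff_dim_lt[OF assms(1,3,4)] .
  ultimately show False using assms(2) by (simp add: facet_of_def)
qed

lemma affine_hull_facet_eq_hyperplane: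
  fixes P :: "'a::euclidean_space set"
  assumes "aff_dim P = DIM('a)" "C facet_of P" "a \<noteq> 0" "C \<subseteq> {x. a \<bullet> x = b}"
  shows "affine hull C = {x. a \<bullet> x = b}"
proof (rule affine_dim_equal)
  show "affine (affine hull C)" "affine {x. a \<bullet> x = b}" by (simp_all add: affine_hyperplane)
  show "affine hull C \<noteq> {}" using assms(2) by (simp add: facet_of_def)
  show "affine hull C \<subseteq> {x. a \<bullet> x = b}" using assms(4) by (simp add: hull_minimal affine_hyperplane)
  show "aff_dim (affine hull C) = aff_dim {x. a \<bullet> x = b}"
    using assms(1-3) by (simp add: facet_of_def)
qed

locale irredundant_hrep =
  fixes P :: "'a::euclidean_space set" and H :: "'a set set"
    and a :: "'a set \<Rightarrow> 'a" and b :: "'a set \<Rightarrow> real"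
  assumes finite_H: "finite H" and P_eq: "P = \<Inter> H"
    and halfspace: "\<And>h. h \<in> H \<Longrightarrow> a h \<noteq> 0 \<and> h = {x. a h \<bullet> x \<le> b h}"
    and irredundant: "\<And>H'. H' \<subset> H \<Longrightarrow> P \<subset> \<Inter> H'"
    and full_dim: "aff_dim P = DIM('a)"
begin

lemma P_eq_halfspaces: "P = {x. \<forall>h\<in>H. a h \<bullet> x \<le> b h}"
  using P_eq halfspace by blast

lemma normal_nonzero: "h \<in> H \<Longrightarrow> a h \<noteq> 0"
  using halfspace by blast

lemma le_if_mem: "h \<in> H \<Longrightarrow> x \<in> P \<Longrightarrow> a h \<bullet> x \<le> b h"
  using P_eq_halfspaces by blast

lemma facet_of_iff: "F facet_of P \<longleftrightarrow> (\<exists>h\<in>H. F = P \<inter> {x. a h \<bullet> x = b h})"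
proof -
  have "affine hull P = UNIV" using full_dim aff_dim_eq_full by blast
  then show ?thesis
    using facet_of_polyhedron_explicit[OF finite_H _ halfspace, of P] P_eq irredundant by auto
qed

lemma inj_on_facet: "inj_on (\<lambda>h. P \<inter> {x. a h \<bullet> x = b h}) H"
proof (rule inj_onI)
  fix h1 h2 assume h: "h1 \<in> H" "h2 \<in> H"
    and eq: "P \<inter> {x. a h1 \<bullet> x = b h1} = P \<inter> {x. a h2 \<bullet> x = b h2}"
  have a0: "a h1 \<noteq> 0" "a h2 \<noteq> 0" using normal_nonzero h by blast+
  have facet: "P \<inter> {x. a h1 \<bullet> x = b h1} facet_of P" using facet_of_iff h(1) by blast
  have "{x. a h1 \<bullet> x = b h1} = affine hull (P \<inter> {x. a h1 \<bullet> x = b h1})"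
    by (rule affine_hull_facet_eq_hyperplane[OF full_dim facet a0(1), symmetric]) blast
  also have "\<dots> = affine hull (P \<inter> {x. a h2 \<bullet> x = b h2})" by (simp only: eq)
  also have "\<dots> = {x. a h2 \<bullet> x = b h2}"
    by (rule affine_hull_facet_eq_hyperplane[OF full_dim facet[unfolded eq] a0(2)]) blast
  finally have "{x. a h1 \<bullet> x = b h1} \<subseteq> {x. a h2 \<bullet> x = b h2}" by simp
  then obtain l where l: "a h2 = l *\<^sub>R a h1" "b h2 = l * b h1"
    by (rule hyperplane_subset_imp_proportional[OF a0(1)])
  have "l > 0"
  proof (rule ccontr)
    assume "\<not> l > 0"
    moreover have "l \<noteq> 0" using l(1) a0(2) by auto
    ultimately have "l < 0" by simp
    have "a h1 \<bullet> x = b h1" if "x \<in> P" for x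
    proof -
      have "a h1 \<bullet> x \<le> b h1" "l * (a h1 \<bullet> x) \<le> l * b h1"
        using le_if_mem[OF h(1) that] le_if_mem[OF h(2) that] l by simp_all
      then show ?thesis using \<open>l < 0\<close> by (simp add: mult_le_cancel_left_neg)
    qed
    then have "P \<subseteq> {x. a h1 \<bullet> x = b h1}" by blast
    then have "aff_dim P \<le> aff_dim {x. a h1 \<bullet> x = b h1}" by (rule aff_dim_subset)
    then show False using full_dim a0(1) by simp
  qed
  have "h2 = {x. a h2 \<bullet> x \<le> b h2}" using halfspace[OF h(2)] by blast
  also have "\<dots> = {x. a h1 \<bullet> x \<le> b h1}" using l \<open>l > 0\<close> by simp
  also have "\<dots> = h1" using halfspace[OF h(1)] by blast
  finally show "h1 = h2" by simp
qed

definition active :: "'a \<Rightarrow> 'a set set" where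
  "active v = {h\<in>H. a h \<bullet> v = b h}"

lemma card_facets_through:
  assumes "v \<in> P" shows "card {F. F facet_of P \<and> v \<in> F} = card (a ` active v)"
proof -
  have "{F. F facet_of P \<and> v \<in> F} = (\<lambda>h. P \<inter> {x. a h \<bullet> x = b h}) ` active v"
    using assms by (auto simp: facet_of_iff active_def)
  moreover have "inj_on (\<lambda>h. P \<inter> {x. a h \<bullet> x = b h}) (active v)"
    using inj_on_facet by (rule inj_on_subset) (auto simp: active_def)
  moreover have "inj_on a (active v)"
  proof (rule inj_onI)
    fix h1 h2 assume h: "h1 \<in> active v" "h2 \<in> active v" "a h1 = a h2"
    then have "{x. a h1 \<bullet> x \<le> b h1} = {x. a h2 \<bullet> x \<le> b h2}" by (simp add: active_def)
    moreover have "h1 = {x. a h1 \<bullet> x \<le> b h1}" "h2 = {x. a h2 \<bullet> x \<le> b h2}"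
      using h(1,2) halfspace by (auto simp: active_def)
    ultimately show "h1 = h2" by metis
  qed
  ultimately show ?thesis by (simp add: card_image)
qed

lemma eventually_eq_vertex_cone:
  assumes "v \<in> P" shows "\<forall>\<^sub>F x in nhds v. x \<in> P \<longleftrightarrow> x \<in> vertex_cone (a ` active v) v"
  using eventually_halfspaces_eq_active_cone[OF finite_H, of a v b] assms le_if_mem
  unfolding active_def P_eq_halfspaces[symmetric] by blast

lemma independent_active_normals:
  assumes "simple_polytope P" "v \<in> P" shows "independent (a ` active v)"
proof -
  have P: "convex P" "compact P" using assms(1) polytope_imp_convex polytope_imp_compact
    by (auto simp: simple_polytope_def)
  define G where "G = \<Inter> (insert P ((\<lambda>h. P \<inter> {x. a h \<bullet> x = b h}) ` active v))"
  have G: "G face_of P"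
    unfolding G_def using P(1) le_if_mem
    by (intro face_of_Inter) (auto intro!: face_of_refl face_of_Int_supporting_hyperplane_le
        simp: active_def)
  moreover have "v \<in> G" using assms(2) by (auto simp: G_def active_def)
  ultimately obtain u where u: "u extreme_point_of G"
    using extreme_point_exists_convex face_of_imp_compact[OF P G] face_of_imp_convex by blast
  then have u_P: "u extreme_point_of P" "u \<in> P" and "u \<in> G"
    using extreme_point_of_face[OF G] by (auto simp: extreme_point_of_def)
  then have "active v \<subseteq> active u" unfolding G_def active_def by blast
  have "span (a ` active u) = UNIV"
    using span_eq_UNIV_if_extreme_point[OF u_P(1) eventually_eq_vertex_cone[OF u_P(2)]] .
  moreover have "card (a ` active u) = DIM('a)"
    using assms(1) u_P card_facets_through[OF u_P(2)] by (simp add: simple_polytope_def)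
  ultimately have "independent (a ` active u)"
    using card_eq_dim[of "a ` active u" UNIV] finite_H by (simp add: active_def)
  then show ?thesis using independent_mono \<open>active v \<subseteq> active u\<close> by blast
qed

lemma flag_imp_common_point:
  assumes "flag_polytope P" "I \<subseteq> H"
    and pairwise: "\<And>h h'. h \<in> I \<Longrightarrow> h' \<in> I \<Longrightarrow> \<exists>x\<in>P. a h \<bullet> x = b h \<and> a h' \<bullet> x = b h'"
  shows "\<exists>x\<in>P. \<forall>h\<in>I. a h \<bullet> x = b h"
proof (cases "I = {}")
  case True
  have "P \<noteq> {}" using full_dim by auto
  then show ?thesis using True by blast
next
  case False
  define facet where "facet h = P \<inter> {x. a h \<bullet> x = b h}" for h
  have "facet ` I \<subseteq> {F. F facet_of P}" using assms(2) by (auto simp: facet_def facet_of_iff)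
  moreover have "\<forall>F\<in>facet ` I. \<forall>G\<in>facet ` I. F \<inter> G \<noteq> {}" using pairwise by (fastforce simp: facet_def)
  ultimately have "\<Inter> (facet ` I) \<noteq> {}" using assms(1) by (simp add: flag_polytope_def)
  then show ?thesis using False by (auto simp: facet_def)
qed

end

lemma polyhedron_obtain_irredundant_hrep:
  fixes P :: "'a::euclidean_space set"
  assumes "polyhedron P" "aff_dim P = DIM('a)"
  obtains H a b where "irredundant_hrep P H a b"
proof -
  obtain H where H: "finite H" "P = affine hull P \<inter> \<Inter> H"
      "\<forall>h\<in>H. \<exists>a b. a \<noteq> 0 \<and> h = {x. a \<bullet> x \<le> b}"
      "\<forall>H'. H' \<subset> H \<longrightarrow> P \<subset> affine hull P \<inter> \<Inter> H'"
    using assms(1) unfolding polyhedron_Int_affine_minimal by blast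
  obtain a b where ab: "\<And>h. h \<in> H \<Longrightarrow> a h \<noteq> 0 \<and> h = {x. a h \<bullet> x \<le> b h}"
    using H(3) by metis
  have "affine hull P = UNIV" using assms(2) aff_dim_eq_full by blast
  then have "irredundant_hrep P H a b"
    using H(1,2,4) assms(2) by (unfold_locales) (simp_all add: ab)
  then show ?thesis by (rule that)
qed

section \<open>Chambers and simple roots\<close>

lemma chamber_eq_halfspaces: "chamber K = {x. \<forall>\<alpha>\<in>K. (- \<alpha>) \<bullet> x \<le> 0}"
  by (auto simp: chamber_def inner_commute)

lemma closed_chamber: "closed (chamber K)"
  unfolding chamber_def by (simp add: Collect_ball_eq closed_INT closed_Collect_le continuous_on_inner
      continuous_on_id continuous_on_const)

lemma polyhedron_chamber: "finite K \<Longrightarrow> polyhedron (chamber K)"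
  unfolding chamber_eq_halfspaces using polyhedron_vertex_cone[of "uminus ` K" 0]
  by (simp add: vertex_cone_def)

lemma chamber_antimono: "K \<subseteq> K' \<Longrightarrow> chamber K' \<subseteq> chamber K"
  by (auto simp: chamber_def)

lemma not_in_interior_chamber_if_orthogonal:
  assumes "\<alpha> \<in> K" "\<alpha> \<noteq> 0" "x \<bullet> \<alpha> = 0" shows "x \<notin> interior (chamber K)"
proof
  assume "x \<in> interior (chamber K)"
  then obtain e where e: "e > 0" "ball x e \<subseteq> chamber K" by (auto simp: mem_interior)
  define y where "y = x - (e / 2 / norm \<alpha>) *\<^sub>R \<alpha>"
  have "y \<in> ball x e" using assms(2) e(1) by (simp add: y_def dist_norm)
  then have "y \<bullet> \<alpha> \<ge> 0" using e(2) assms(1) by (auto simp: chamber_def)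
  moreover have "y \<bullet> \<alpha> = - (e / 2 / norm \<alpha>) * (\<alpha> \<bullet> \<alpha>)"
    using assms(3) by (simp add: y_def inner_diff_left)
  moreover have "(e / 2 / norm \<alpha>) * (\<alpha> \<bullet> \<alpha>) > 0" using assms(2) e(1) by simp
  ultimately show False by linarith
qed

lemma eventually_chamber_eq_vertex_cone:
  assumes "finite K" "v \<in> chamber K"
  shows "\<forall>\<^sub>F x in nhds v. x \<in> chamber K \<longleftrightarrow> x \<in> vertex_cone (uminus ` {\<alpha>\<in>K. v \<bullet> \<alpha> = 0}) v"
proof -
  have "{\<alpha>\<in>K. (- \<alpha>) \<bullet> v = 0} = {\<alpha>\<in>K. v \<bullet> \<alpha> = 0}" by (auto simp: inner_commute)
  then show ?thesis
    using eventually_halfspaces_eq_active_cone[OF assms(1), of uminus v "\<lambda>_. 0"] assms(2)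
    unfolding chamber_eq_halfspaces by simp
qed

locale simple_root_system =
  fixes R S :: "'a::euclidean_space set"
  assumes root_system: "root_system R" and simple_system: "simple_system R S"
begin

abbreviation W :: "('a \<Rightarrow> 'a) set" where "W \<equiv> parabolic S"

lemma simple_subset_roots: "S \<subseteq> R"
  using simple_system by (simp add: simple_system_def)

lemma independent_simple: "independent S"
  using simple_system by (simp add: simple_system_def)

lemma finite_simple: "finite S"
  using independent_simple by (rule finiteI_independent)

lemma simple_nonzero: "\<alpha> \<in> S \<Longrightarrow> \<alpha> \<noteq> 0"
  using simple_subset_roots root_system by (auto simp: root_system_def)

lemma finite_W: "finite W"
proof -
  have "inj_on (\<lambda>w. restrict w R) W"
  proof (rule inj_onI)
    fix w w' assume w: "w \<in> W" "w' \<in> W" "restrict w R = restrict w' R"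
    have "w x = w' x" for x
    proof (rule linear_eq_on_span[OF linear_parabolic[OF w(1)] linear_parabolic[OF w(2)]])
      show "\<And>y. y \<in> R \<Longrightarrow> w y = w' y" using w(3) by (metis restrict_apply')
      show "x \<in> span R" using root_system by (simp add: root_system_def)
    qed
    then show "w = w'" by auto
  qed
  moreover have "(\<lambda>w. restrict w R) ` W \<subseteq> Pi\<^sub>E R (\<lambda>_. R)"
    using parabolic_root_closed[OF root_system simple_subset_roots] by auto
  moreover have "finite (Pi\<^sub>E R (\<lambda>_. R))"
    using root_system by (simp add: root_system_def finite_PiE)
  ultimately show ?thesis using finite_subset finite_image_iff by metis
qed

lemma root_simple_coeffs:
  assumes "\<beta> \<in> R"
  obtains c where "\<beta> = (\<Sum>\<alpha>\<in>S. c \<alpha> *\<^sub>R \<alpha>)" "(\<forall>\<alpha>\<in>S. c \<alpha> \<ge> 0) \<or> (\<forall>\<alpha>\<in>S. c \<alpha> \<le> 0)"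
  using simple_system assms unfolding simple_system_def by blast

lemma simple_roots_obtuse:
  assumes "\<alpha> \<in> S" "\<beta> \<in> S" "\<alpha> \<noteq> \<beta>" shows "\<alpha> \<bullet> \<beta> \<le> 0"
proof (rule ccontr)
  assume pos: "\<not> \<alpha> \<bullet> \<beta> \<le> 0"
  define k where "k = 2 * (\<beta> \<bullet> \<alpha>) / (\<alpha> \<bullet> \<alpha>)"
  have k: "k > 0" using pos simple_nonzero[OF assms(1)] by (simp add: k_def inner_commute)
  have "refl \<alpha> \<beta> \<in> R"
    using root_system simple_subset_roots assms unfolding root_system_def by blast
  then obtain c where c: "refl \<alpha> \<beta> = (\<Sum>\<gamma>\<in>S. c \<gamma> *\<^sub>R \<gamma>)" "(\<forall>\<gamma>\<in>S. c \<gamma> \<ge> 0) \<or> (\<forall>\<gamma>\<in>S. c \<gamma> \<le> 0)"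
    by (rule root_simple_coeffs)
  define d where "d \<gamma> = (if \<gamma> = \<beta> then 1 else 0) - (if \<gamma> = \<alpha> then k else 0)" for \<gamma>
  have "(\<Sum>\<gamma>\<in>S. d \<gamma> *\<^sub>R \<gamma>) = \<beta> - k *\<^sub>R \<alpha>"
    using assms finite_simple
    by (simp add: d_def scaleR_left_diff_distrib sum_subtractf if_distrib[of "\<lambda>c. c *\<^sub>R _"]
        sum.delta' cong: if_cong)
  also have "\<dots> = refl \<alpha> \<beta>" by (simp add: refl_def k_def)
  finally have "(\<Sum>\<gamma>\<in>S. (c \<gamma> - d \<gamma>) *\<^sub>R \<gamma>) = 0"
    using c(1) by (simp add: scaleR_left_diff_distrib sum_subtractf)
  then have "\<forall>\<gamma>\<in>S. c \<gamma> - d \<gamma> = 0"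
    using independent_simple finite_simple by (auto simp: independent_explicit)
  then have "c \<beta> = 1" "c \<alpha> = - k" using assms by (auto simp: d_def)
  then show False using c(2) k assms by force
qed

lemma inner_root_nonzero_if_strictly_dominant:
  assumes "\<And>\<alpha>. \<alpha> \<in> S \<Longrightarrow> u \<bullet> \<alpha> > 0" "\<beta> \<in> R" shows "u \<bullet> \<beta> \<noteq> 0"
proof -
  obtain c where c: "\<beta> = (\<Sum>\<alpha>\<in>S. c \<alpha> *\<^sub>R \<alpha>)" "(\<forall>\<alpha>\<in>S. c \<alpha> \<ge> 0) \<or> (\<forall>\<alpha>\<in>S. c \<alpha> \<le> 0)"
    by (rule root_simple_coeffs[OF assms(2)])
  have "\<beta> \<noteq> 0" using assms(2) root_system by (auto simp: root_system_def)
  moreover have "\<beta> = 0" if "\<forall>\<alpha>\<in>S. c \<alpha> = 0" using c(1) that by simp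
  ultimately obtain \<alpha> where \<alpha>: "\<alpha> \<in> S" "c \<alpha> \<noteq> 0" by blast
  have pos: "(\<Sum>\<gamma>\<in>S. s * c \<gamma> * (u \<bullet> \<gamma>)) > 0"
    if "s * c \<alpha> \<noteq> 0" "\<forall>\<gamma>\<in>S. s * c \<gamma> \<ge> 0" for s :: real
  proof (rule sum_pos2[OF finite_simple \<alpha>(1)])
    have "s * c \<alpha> > 0" using that \<alpha>(1) by (auto simp: less_le)
    then show "0 < s * c \<alpha> * (u \<bullet> \<alpha>)" using assms(1)[OF \<alpha>(1)] by simp
    show "0 \<le> s * c \<gamma> * (u \<bullet> \<gamma>)" if "\<gamma> \<in> S" for \<gamma>
      using \<open>\<forall>\<gamma>\<in>S. s * c \<gamma> \<ge> 0\<close> that assms(1)[OF that] by simp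
  qed
  have "(\<Sum>\<gamma>\<in>S. c \<gamma> * (u \<bullet> \<gamma>)) > 0 \<or> (\<Sum>\<gamma>\<in>S. - c \<gamma> * (u \<bullet> \<gamma>)) > 0"
    using c(2) pos[of 1] pos[of "-1"] \<alpha>(2) by simp blast
  moreover have "u \<bullet> \<beta> = (\<Sum>\<gamma>\<in>S. c \<gamma> * (u \<bullet> \<gamma>))" using c(1) by (simp add: inner_sum_right)
  ultimately show ?thesis by (auto simp: sum_negf)
qed

lemma exists_height_vector: "\<exists>\<rho>. \<forall>\<alpha>\<in>S. \<rho> \<bullet> \<alpha> = 1"
  using independent_exists_inner_eq[OF independent_simple, of "\<lambda>_. 1"] by metis

lemma chamber_meets_if_refl_closed:
  assumes "K \<subseteq> S" "compact E" "E \<noteq> {}"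
    and refl_closed: "\<And>\<alpha> x. \<alpha> \<in> K \<Longrightarrow> x \<in> E \<Longrightarrow> x \<bullet> \<alpha> < 0 \<Longrightarrow> refl \<alpha> x \<in> E"
  shows "E \<inter> chamber K \<noteq> {}"
proof -
  obtain \<rho> where \<rho>: "\<forall>\<alpha>\<in>S. \<rho> \<bullet> \<alpha> = 1" using exists_height_vector by blast
  obtain y where y: "y \<in> E" "\<And>z. z \<in> E \<Longrightarrow> \<rho> \<bullet> z \<le> \<rho> \<bullet> y"
    using continuous_attains_sup[OF assms(2,3) continuous_on_inner[OF continuous_on_const continuous_on_id]]
    by blast
  have "y \<bullet> \<alpha> \<ge> 0" if "\<alpha> \<in> K" for \<alpha>
  proof (rule ccontr)
    assume "\<not> y \<bullet> \<alpha> \<ge> 0"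
    then have neg: "y \<bullet> \<alpha> < 0" by simp
    have "\<alpha> \<bullet> \<alpha> > 0" "\<alpha> \<bullet> \<rho> = 1"
      using simple_nonzero \<rho> that assms(1) by (auto simp: inner_commute)
    then have "\<rho> \<bullet> refl \<alpha> y > \<rho> \<bullet> y" using neg by (simp add: inner_refl_right divide_neg_pos)
    then show False using y refl_closed[OF that y(1) neg] by force
  qed
  then show ?thesis using y(1) by (auto simp: chamber_def)
qed

lemma chamber_point_on_walls:
  assumes "K \<subseteq> S" "J \<subseteq> K" "compact E" "convex E" "E \<inter> chamber K \<noteq> {}"
    and refl_closed: "\<And>\<alpha> x. \<alpha> \<in> J \<Longrightarrow> x \<in> E \<Longrightarrow> refl \<alpha> x \<in> E"
  obtains y where "y \<in> E \<inter> chamber K" "\<And>\<alpha>. \<alpha> \<in> J \<Longrightarrow> y \<bullet> \<alpha> = 0"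
proof -
  obtain \<rho> where \<rho>: "\<forall>\<alpha>\<in>S. \<rho> \<bullet> \<alpha> = 1" using exists_height_vector by blast
  have "compact (E \<inter> chamber K)" using assms(3) closed_chamber by (rule compact_Int_closed)
  then obtain y where y: "y \<in> E \<inter> chamber K" "\<And>z. z \<in> E \<inter> chamber K \<Longrightarrow> \<rho> \<bullet> y \<le> \<rho> \<bullet> z"
    using continuous_attains_inf[OF _ assms(5) continuous_on_inner[OF continuous_on_const continuous_on_id]]
    by blast
  have "y \<bullet> \<alpha> = 0" if "\<alpha> \<in> J" for \<alpha>
  proof (rule ccontr)
    assume "y \<bullet> \<alpha> \<noteq> 0"
    have \<alpha>: "\<alpha> \<in> K" "\<alpha> \<in> S" "\<alpha> \<bullet> \<alpha> > 0" using that assms(1,2) simple_nonzero by auto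
    then have "y \<bullet> \<alpha> > 0" using y(1) \<open>y \<bullet> \<alpha> \<noteq> 0\<close> by (auto simp: chamber_def less_le)
    define t where "t = (y \<bullet> \<alpha>) / (\<alpha> \<bullet> \<alpha>)"
    have t: "t > 0" using \<open>y \<bullet> \<alpha> > 0\<close> \<alpha>(3) by (simp add: t_def)
    define m where "m = y - t *\<^sub>R \<alpha>"
    have "m = (1/2) *\<^sub>R y + (1/2) *\<^sub>R refl \<alpha> y"
      by (simp add: m_def t_def refl_def algebra_simps flip: scaleR_add_left)
    then have "m \<in> E" using convexD[OF assms(4)] y(1) refl_closed[OF that] by simp
    moreover have "m \<bullet> \<beta> \<ge> 0" if "\<beta> \<in> K" for \<beta>
    proof (cases "\<beta> = \<alpha>")
      case False
      then have "\<alpha> \<bullet> \<beta> \<le> 0" using simple_roots_obtuse \<alpha>(2) that assms(1) by blast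
      moreover have "y \<bullet> \<beta> \<ge> 0" using y(1) that by (simp add: chamber_def)
      moreover have "t * (\<alpha> \<bullet> \<beta>) \<le> 0" using t \<open>\<alpha> \<bullet> \<beta> \<le> 0\<close> by (simp add: mult_nonneg_nonpos)
      ultimately show ?thesis by (simp add: m_def inner_diff_left)
    qed (use \<alpha>(3) in \<open>simp add: m_def t_def inner_diff_left\<close>)
    then have "m \<in> chamber K" by (simp add: chamber_def)
    moreover have "\<rho> \<bullet> m < \<rho> \<bullet> y" using t \<rho> \<alpha>(2) by (simp add: m_def inner_diff_right)
    ultimately show False using y(2) by force
  qed
  then show ?thesis using that y(1) by blast
qed

lemma W_conjugate_into_chamber:
  obtains w where "w \<in> W" "w x \<in> chamber S"
proof -
  have "(\<lambda>w. w x) ` W \<inter> chamber S \<noteq> {}"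
  proof (rule chamber_meets_if_refl_closed[OF order_refl])
    show "compact ((\<lambda>w. w x) ` W)" using finite_W by (simp add: finite_imp_compact)
    show "(\<lambda>w. w x) ` W \<noteq> {}" using id_in_parabolic by blast
    show "refl \<alpha> y \<in> (\<lambda>w. w x) ` W" if \<alpha>: "\<alpha> \<in> S" and y: "y \<in> (\<lambda>w. w x) ` W" for \<alpha> y
    proof -
      obtain w where w: "w \<in> W" "y = w x" using y by blast
      then have "refl \<alpha> y = (refl \<alpha> \<circ> w) x" by simp
      then show ?thesis using parabolic_comp[OF refl_in_parabolic[OF \<alpha>] w(1)] by blast
    qed
  qed
  then show ?thesis using that by blast
qed

end

section \<open>W-symmetric polytopes and their quotients\<close>

locale W_symmetric_polytope = simple_root_system +
  fixes \<Lambda> :: "'a set"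
  assumes finite_\<Lambda>: "finite \<Lambda>"
    and full_dim: "aff_dim (W_polytope S \<Lambda>) = DIM('a)"
    and nondegenerate: "\<And>v. v extreme_point_of W_polytope S \<Lambda> \<Longrightarrow> v \<notin> frontier (chamber S)"
begin

abbreviation P :: "'a set" where "P \<equiv> W_polytope S \<Lambda>"

lemma polytope_P: "polytope P"
proof -
  have "{w x | w x. w \<in> W \<and> x \<in> \<Lambda>} = (\<lambda>(w, x). w x) ` (W \<times> \<Lambda>)" by auto
  then have "finite {w x | w x. w \<in> W \<and> x \<in> \<Lambda>}" using finite_W finite_\<Lambda> by simp
  then show ?thesis unfolding W_polytope_def polytope_def by blast
qed

lemma convex_P: "convex P" and compact_P: "compact P" and polyhedron_P: "polyhedron P"
  using polytope_P polytope_imp_convex polytope_imp_compact polytope_imp_polyhedron by auto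

lemma W_image_orbit:
  assumes "w \<in> W" shows "w ` {u x | u x. u \<in> W \<and> x \<in> \<Lambda>} = {u x | u x. u \<in> W \<and> x \<in> \<Lambda>}"
proof (intro equalityI subsetI)
  fix y assume "y \<in> w ` {u x | u x. u \<in> W \<and> x \<in> \<Lambda>}"
  then obtain u x where "y = (w \<circ> u) x" "u \<in> W" "x \<in> \<Lambda>" by auto
  then show "y \<in> {u x | u x. u \<in> W \<and> x \<in> \<Lambda>}" using parabolic_comp[OF assms] by blast
next
  fix y assume "y \<in> {u x | u x. u \<in> W \<and> x \<in> \<Lambda>}"
  then obtain u x where y: "y = u x" "u \<in> W" "x \<in> \<Lambda>" by blast
  obtain w' where w': "w' \<in> W" "w \<circ> w' = id" using parabolic_inverse[OF assms] by blast
  have "y = w ((w' \<circ> u) x)" using y(1) fun_cong[OF w'(2)] by simp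
  then show "y \<in> w ` {u x | u x. u \<in> W \<and> x \<in> \<Lambda>}" using parabolic_comp[OF w'(1) y(2)] y(3) by blast
qed

lemma W_image_P: "w \<in> W \<Longrightarrow> w ` P = P"
  unfolding W_polytope_def by (simp add: convex_hull_linear_image[OF linear_parabolic] W_image_orbit)

lemma refl_mem_P: "\<alpha> \<in> S \<Longrightarrow> x \<in> P \<Longrightarrow> refl \<alpha> x \<in> P"
  using W_image_P[OF refl_in_parabolic] by blast

lemma extreme_point_W_image:
  assumes "w \<in> W" "v extreme_point_of P" shows "w v extreme_point_of P"
  using face_of_linear_image[OF linear_parabolic[OF assms(1)] inj_parabolic[OF assms(1)], of "{v}" P]
    assms W_image_P by (simp add: face_of_singleton)

lemma facet_W_image:
  assumes "w \<in> W" "F facet_of P" shows "w ` F facet_of P"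
proof -
  have lin: "linear w" and inj: "inj w" using linear_parabolic inj_parabolic assms(1) by blast+
  have "w ` F face_of w ` P" "w ` F \<noteq> {}" "aff_dim (w ` F) = aff_dim (w ` P) - 1"
    using assms(2) face_of_linear_image[OF lin inj] aff_dim_injective_linear_image[OF lin inj]
    by (auto simp: facet_of_def)
  then show ?thesis using W_image_P[OF assms(1)] by (simp add: facet_of_def)
qed

lemma card_facets_through_W_image:
  assumes "w \<in> W"
  shows "card {F. F facet_of P \<and> w v \<in> F} = card {F. F facet_of P \<and> v \<in> F}"
proof -
  obtain w' where w': "w' \<in> W" "w' \<circ> w = id" "w \<circ> w' = id" using parabolic_inverse[OF assms] by blast
  have "{F. F facet_of P \<and> w v \<in> F} = image w ` {F. F facet_of P \<and> v \<in> F}"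
  proof (intro equalityI subsetI)
    fix G assume G: "G \<in> {F. F facet_of P \<and> w v \<in> F}"
    have "G = w ` (w' ` G)" by (simp add: image_comp w'(3))
    moreover have "w' ` G facet_of P" "v \<in> w' ` G"
      using facet_W_image[OF w'(1)] G fun_cong[OF w'(2), of v] by (auto intro: image_eqI[where x = "w v"])
    ultimately show "G \<in> image w ` {F. F facet_of P \<and> v \<in> F}" by blast
  qed (use facet_W_image[OF assms] in auto)
  moreover have "inj_on (image w) {F. F facet_of P \<and> v \<in> F}"
    using inj_parabolic[OF assms] by (simp add: inj_on_def inj_image_eq_iff)
  ultimately show ?thesis by (simp add: card_image)
qed

lemma W_conjugate_vertex_into_interior:
  assumes "v extreme_point_of P"
  obtains w where "w \<in> W" "w v extreme_point_of P" "w v \<in> interior (chamber S)"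
proof -
  obtain w where w: "w \<in> W" "w v \<in> chamber S" by (rule W_conjugate_into_chamber)
  have "w v extreme_point_of P" by (rule extreme_point_W_image[OF w(1) assms])
  then have "w v \<in> interior (chamber S)"
    using nondegenerate w(2) closure_closed[OF closed_chamber] by (auto simp: frontier_def)
  then show ?thesis using that w(1) \<open>w v extreme_point_of P\<close> by blast
qed

lemma extreme_point_not_orthogonal_root:
  assumes "v extreme_point_of P" "\<beta> \<in> R" shows "v \<bullet> \<beta> \<noteq> 0"
proof -
  obtain w where w: "w \<in> W" "w v \<in> interior (chamber S)"
    using W_conjugate_vertex_into_interior[OF assms(1)] by blast
  have "w v \<bullet> \<alpha> > 0" if "\<alpha> \<in> S" for \<alpha>
    using w(2) interior_subset[of "chamber S"] that
      not_in_interior_chamber_if_orthogonal[OF that simple_nonzero[OF that]]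
    by (force simp: chamber_def less_le)
  then have "w v \<bullet> w \<beta> \<noteq> 0"
    using inner_root_nonzero_if_strictly_dominant
      parabolic_root_closed[OF root_system simple_subset_roots w(1) assms(2)] by blast
  then show ?thesis using w(1) by simp
qed

lemma refl_stays_on_supporting_hyperplane:
  assumes "\<alpha> \<in> S" "\<And>y. y \<in> P \<Longrightarrow> c \<bullet> y \<le> d" "x \<in> P" "c \<bullet> x = d" "(x \<bullet> \<alpha>) * (\<alpha> \<bullet> c) \<le> 0"
  shows "c \<bullet> refl \<alpha> x = d"
proof -
  have "\<alpha> \<bullet> \<alpha> > 0" using simple_nonzero[OF assms(1)] by simp
  then have "(2 * (x \<bullet> \<alpha>) / (\<alpha> \<bullet> \<alpha>)) * (\<alpha> \<bullet> c) \<le> 0"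
    using assms(5) by (simp add: mult_le_0_iff divide_le_0_iff zero_le_mult_iff)
  then have "c \<bullet> refl \<alpha> x \<ge> d" using assms(4) by (simp add: inner_refl_right)
  moreover have "c \<bullet> refl \<alpha> x \<le> d" using assms(2) refl_mem_P assms(1,3) by blast
  ultimately show ?thesis by simp
qed

lemma supporting_normal_root_nonneg:
  assumes "\<alpha> \<in> S" "\<And>y. y \<in> P \<Longrightarrow> c \<bullet> y \<le> d"
    and "F \<subseteq> P \<inter> chamber {\<alpha>} \<inter> {x. c \<bullet> x = d}" "\<not> F \<subseteq> {x. x \<bullet> \<alpha> = 0}"
  shows "\<alpha> \<bullet> c \<ge> 0"
proof (rule ccontr)
  assume "\<not> \<alpha> \<bullet> c \<ge> 0"
  obtain x where "x \<in> F" "x \<bullet> \<alpha> \<noteq> 0" using assms(4) by blast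
  then have x: "x \<in> P" "c \<bullet> x = d" "x \<bullet> \<alpha> > 0"
    using assms(3) by (auto simp: chamber_def less_le)
  have "\<alpha> \<bullet> \<alpha> > 0" using simple_nonzero[OF assms(1)] by simp
  then have "2 * (x \<bullet> \<alpha>) / (\<alpha> \<bullet> \<alpha>) > 0" using x(3) by simp
  then have "(2 * (x \<bullet> \<alpha>) / (\<alpha> \<bullet> \<alpha>)) * (\<alpha> \<bullet> c) < 0"
    using \<open>\<not> \<alpha> \<bullet> c \<ge> 0\<close> by (intro mult_pos_neg) auto
  then have "c \<bullet> refl \<alpha> x > d" using x(2) by (simp add: inner_refl_right)
  then show False using assms(2)[OF refl_mem_P[OF assms(1) x(1)]] by simp
qed

lemma supporting_normal_orthogonal_root:
  assumes "\<alpha> \<in> S" "\<And>y. y \<in> P \<Longrightarrow> c \<bullet> y \<le> d" "x \<in> P" "c \<bullet> x = d" "x \<bullet> \<alpha> = 0"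
  shows "\<alpha> \<bullet> c = 0"
proof -
  have "refl \<alpha> c \<bullet> y \<le> d" if "y \<in> P" for y
    using assms(2)[OF refl_mem_P[OF assms(1) that]] by (simp add: inner_refl_swap)
  then have D: "(P \<inter> {y. c \<bullet> y = d}) \<inter> (P \<inter> {y. refl \<alpha> c \<bullet> y = d}) face_of P"
    using assms(2) convex_P by (intro face_of_Int face_of_Int_supporting_hyperplane_le) auto
  moreover have "x \<in> (P \<inter> {y. c \<bullet> y = d}) \<inter> (P \<inter> {y. refl \<alpha> c \<bullet> y = d})"
    using assms(3-5) by (simp add: inner_refl_swap refl_fixes_orthogonal)
  ultimately obtain u where "u extreme_point_of (P \<inter> {y. c \<bullet> y = d}) \<inter> (P \<inter> {y. refl \<alpha> c \<bullet> y = d})"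
    using extreme_point_exists_convex face_of_imp_compact[OF convex_P compact_P] face_of_imp_convex
    by (metis empty_iff)
  then have u: "u extreme_point_of P" "c \<bullet> u = d" "c \<bullet> refl \<alpha> u = d"
    using extreme_point_of_face[OF D] by (auto simp: inner_refl_swap)
  have "u \<bullet> \<alpha> \<noteq> 0" "\<alpha> \<bullet> \<alpha> \<noteq> 0"
    using extreme_point_not_orthogonal_root[OF u(1)] simple_subset_roots simple_nonzero assms(1) by auto
  then show ?thesis using u(2,3) by (simp add: inner_refl_right)
qed

lemma aff_dim_Int_chamber:
  assumes "K \<subseteq> S" shows "aff_dim (P \<inter> chamber K) = DIM('a)"
proof -
  have "P \<noteq> {}" using full_dim by auto
  then obtain v where "v extreme_point_of P"
    using extreme_point_exists_convex[OF compact_P convex_P] by blast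
  then obtain u where u: "u extreme_point_of P" "u \<in> interior (chamber S)"
    using W_conjugate_vertex_into_interior by metis
  then have "u \<in> interior (chamber K)" using interior_mono[OF chamber_antimono[OF assms]] by blast
  then obtain e where e: "e > 0" "ball u e \<subseteq> chamber K" by (auto simp: mem_interior)
  have "aff_dim P = aff_dim (P \<inter> ball u e)"
    using aff_dim_Int_ball[OF convex_P _ e(1)] u(1) by (simp add: extreme_point_of_def)
  also have "\<dots> \<le> aff_dim (P \<inter> chamber K)" using e(2) by (intro aff_dim_subset) blast
  finally show ?thesis using full_dim aff_dim_le_DIM[of "P \<inter> chamber K"] by linarith
qed


lemma polyhedron_Int_chamber: "K \<subseteq> S \<Longrightarrow> polyhedron (P \<inter> chamber K)"
  using polyhedron_Int[OF polyhedron_P polyhedron_chamber] finite_subset[OF _ finite_simple] by simp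

lemma polytope_Int_chamber: "K \<subseteq> S \<Longrightarrow> polytope (P \<inter> chamber K)"
  using polytope_Int_polyhedron[OF polytope_P polyhedron_chamber] finite_subset[OF _ finite_simple] by simp

lemma simple_if_simple_Int_chamber:
  assumes "K \<subseteq> S" "simple_polytope (P \<inter> chamber K)"
  shows "simple_polytope P"
  unfolding simple_polytope_def
proof (intro conjI allI impI)
  show "polytope P" by (rule polytope_P)
  fix v assume "v extreme_point_of P"
  then obtain w where w: "w \<in> W" "w v extreme_point_of P" "w v \<in> interior (chamber S)"
    by (rule W_conjugate_vertex_into_interior)
  then have interior: "w v \<in> interior (chamber K)"
    using interior_mono[OF chamber_antimono[OF assms(1)]] by blast
  have near: "\<forall>\<^sub>F x in nhds (w v). x \<in> P \<longleftrightarrow> x \<in> P \<inter> chamber K"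
    using eventually_nhds_in_nhd[OF interior] by (rule eventually_mono) blast
  have "w v extreme_point_of (P \<inter> chamber K)"
    using w(2) interior interior_subset by (auto simp: extreme_point_of_def)
  have "card {F. F facet_of P \<and> v \<in> F} = card {F. F facet_of P \<and> w v \<in> F}"
    using card_facets_through_W_image[OF w(1)] by simp
  also have "\<dots> = card {F. F facet_of (P \<inter> chamber K) \<and> w v \<in> F}"
    by (rule card_facets_through_eq_if_eventually_eq[OF polyhedron_P polyhedron_Int_chamber[OF assms(1)] near])
  also have "\<dots> = DIM('a)"
    using assms(2) \<open>w v extreme_point_of (P \<inter> chamber K)\<close> by (simp add: simple_polytope_def)
  finally show "card {F. F facet_of P \<and> v \<in> F} = DIM('a)" .
qed

lemma independent_normals_Int_chamber:
  assumes "K \<subseteq> S" "simple_polytope P" "irredundant_hrep P H a b" "v \<in> P"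
  shows "independent (a ` {h\<in>H. a h \<bullet> v = b h} \<union> uminus ` {\<alpha>\<in>K. v \<bullet> \<alpha> = 0})"
proof (rule independent_Un_orthogonal)
  interpret irredundant_hrep P H a b by (rule assms(3))
  show "independent (a ` {h\<in>H. a h \<bullet> v = b h})"
    using independent_active_normals[OF assms(2,4)] by (simp add: active_def)
  have "{\<alpha>\<in>K. v \<bullet> \<alpha> = 0} \<subseteq> S" using assms(1) by blast
  then have "independent {\<alpha>\<in>K. v \<bullet> \<alpha> = 0}" by (rule independent_mono[OF independent_simple])
  then show "independent (uminus ` {\<alpha>\<in>K. v \<bullet> \<alpha> = 0})"
    using linear_independent_injective_image[OF linear_uminus] by (simp add: inj_on_def)
  show "n \<bullet> m = 0" if nm: "n \<in> a ` {h\<in>H. a h \<bullet> v = b h}" "m \<in> uminus ` {\<alpha>\<in>K. v \<bullet> \<alpha> = 0}" for n m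
  proof -
    obtain h \<alpha> where h: "h \<in> H" "a h \<bullet> v = b h" "n = a h" and \<alpha>: "\<alpha> \<in> K" "v \<bullet> \<alpha> = 0" "m = - \<alpha>"
      using nm by blast
    have "\<alpha> \<bullet> a h = 0"
      using supporting_normal_orthogonal_root[OF _ le_if_mem[OF h(1)] assms(4) h(2) \<alpha>(2)] \<alpha>(1) assms(1)
      by blast
    then show ?thesis using h(3) \<alpha>(3) by (simp add: inner_commute)
  qed
qed

lemma simple_Int_chamber_if_simple:
  assumes "K \<subseteq> S" "simple_polytope P"
  shows "simple_polytope (P \<inter> chamber K)"
  unfolding simple_polytope_def
proof (intro conjI allI impI)
  show "polytope (P \<inter> chamber K)" by (rule polytope_Int_chamber[OF assms(1)])
  fix v assume v: "v extreme_point_of (P \<inter> chamber K)"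
  then have vP: "v \<in> P" and vK: "v \<in> chamber K" by (auto simp: extreme_point_of_def)
  obtain H a b where hrep: "irredundant_hrep P H a b"
    using polyhedron_obtain_irredundant_hrep[OF polyhedron_P full_dim] by blast
  interpret irredundant_hrep P H a b by (rule hrep)
  define M where "M = a ` active v \<union> uminus ` {\<alpha>\<in>K. v \<bullet> \<alpha> = 0}"
  have "finite K" using finite_subset[OF assms(1) finite_simple] .
  have near: "\<forall>\<^sub>F x in nhds v. x \<in> P \<inter> chamber K \<longleftrightarrow> x \<in> vertex_cone M v"
    using eventually_conj[OF eventually_eq_vertex_cone[OF vP] eventually_chamber_eq_vertex_cone[OF \<open>finite K\<close> vK]]
    by (rule eventually_mono) (auto simp: M_def vertex_cone_Un)
  have "independent M"
    using independent_normals_Int_chamber[OF assms hrep vP] by (simp add: M_def active_def)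
  moreover have "span M = UNIV" by (rule span_eq_UNIV_if_extreme_point[OF v near])
  ultimately have "card M = DIM('a)" by (metis dim_UNIV dim_eq_card_independent dim_span)
  have "card {F. F facet_of (P \<inter> chamber K) \<and> v \<in> F} = card {F. F facet_of vertex_cone M v \<and> v \<in> F}"
    using \<open>independent M\<close> polyhedron_Int_chamber[OF assms(1)]
    by (intro card_facets_through_eq_if_eventually_eq near polyhedron_vertex_cone finiteI_independent)
  also have "\<dots> = DIM('a)"
    using card_facets_through_vertex_cone[OF \<open>independent M\<close>] \<open>card M = DIM('a)\<close> by simp
  finally show "card {F. F facet_of (P \<inter> chamber K) \<and> v \<in> F} = DIM('a)" .
qed


lemma facet_of_Int_chamber_cases:
  assumes "K \<subseteq> S" "irredundant_hrep P H a b" "G facet_of (P \<inter> chamber K)"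
  shows "(\<exists>h\<in>H. G = (P \<inter> chamber K) \<inter> {x. a h \<bullet> x = b h})
       \<or> (\<exists>\<alpha>\<in>K. G = (P \<inter> chamber K) \<inter> {x. x \<bullet> \<alpha> = 0})"
proof -
  interpret irredundant_hrep P H a b by (rule assms(2))
  define c where "c = case_sum a (uminus :: 'a \<Rightarrow> 'a)"
  define d where "d = case_sum b (\<lambda>_ :: 'a. 0 :: real)"
  have Q: "P \<inter> chamber K = {x. \<forall>i\<in>H <+> K. c i \<bullet> x \<le> d i}"
  proof (intro equalityI subsetI)
    fix x assume "x \<in> {x. \<forall>i\<in>H <+> K. c i \<bullet> x \<le> d i}"
    then have "\<forall>h\<in>H. c (Inl h) \<bullet> x \<le> d (Inl h)" "\<forall>\<alpha>\<in>K. c (Inr \<alpha>) \<bullet> x \<le> d (Inr \<alpha>)" by auto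
    then show "x \<in> P \<inter> chamber K"
      unfolding P_eq_halfspaces chamber_eq_halfspaces by (simp add: c_def d_def)
  qed (auto simp: P_eq_halfspaces chamber_eq_halfspaces c_def d_def)
  have "finite (H <+> K)" using finite_H finite_subset[OF assms(1) finite_simple] by simp
  moreover have "c i \<noteq> 0" if "i \<in> H <+> K" for i
    using that normal_nonzero simple_nonzero assms(1) by (auto simp: c_def)
  moreover have "aff_dim {x. \<forall>i\<in>H <+> K. c i \<bullet> x \<le> d i} = DIM('a)"
    using aff_dim_Int_chamber[OF assms(1)] Q by simp
  moreover have "G facet_of {x. \<forall>i\<in>H <+> K. c i \<bullet> x \<le> d i}" using assms(3) Q by simp
  ultimately obtain i where "i \<in> H <+> K" "G = (P \<inter> chamber K) \<inter> {x. c i \<bullet> x = d i}"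
    unfolding Q by (rule facet_of_halfspaces_obtain)
  then show ?thesis by (auto simp: c_def d_def inner_commute)
qed

lemma wall_facet_eq:
  assumes "K \<subseteq> S" "\<alpha> \<in> K" "G facet_of (P \<inter> chamber K)" "G \<subseteq> {x. x \<bullet> \<alpha> = 0}"
  shows "G = (P \<inter> chamber K) \<inter> {x. x \<bullet> \<alpha> = 0}"
proof (rule facet_eq_face_if_subset[OF _ assms(3)])
  show "convex (P \<inter> chamber K)" using polytope_Int_chamber[OF assms(1)] polytope_imp_convex by blast
  then show "(P \<inter> chamber K) \<inter> {x. x \<bullet> \<alpha> = 0} face_of (P \<inter> chamber K)"
    using face_of_Int_supporting_hyperplane_le[of "P \<inter> chamber K" "- \<alpha>" 0] assms(2)
    by (auto simp: chamber_def inner_commute)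
  have "\<not> P \<inter> chamber K \<subseteq> {x. \<alpha> \<bullet> x = 0}"
  proof
    assume "P \<inter> chamber K \<subseteq> {x. \<alpha> \<bullet> x = 0}"
    then have "aff_dim (P \<inter> chamber K) \<le> aff_dim {x. \<alpha> \<bullet> x = 0}" by (rule aff_dim_subset)
    moreover have "\<alpha> \<noteq> 0" using simple_nonzero assms(1,2) by blast
    ultimately show False using aff_dim_Int_chamber[OF assms(1)] by simp
  qed
  then show "(P \<inter> chamber K) \<inter> {x. x \<bullet> \<alpha> = 0} \<noteq> P \<inter> chamber K" by (auto simp: inner_commute)
  show "G \<subseteq> (P \<inter> chamber K) \<inter> {x. x \<bullet> \<alpha> = 0}" using assms(3,4) facet_of_imp_subset by blast
qed

lemma face_meets_chamber_on_walls:
  assumes "K \<subseteq> S" "J \<subseteq> K"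
    and supporting: "\<And>i y. i \<in> I \<Longrightarrow> y \<in> P \<Longrightarrow> c i \<bullet> y \<le> d i"
    and nonneg: "\<And>i \<alpha>. i \<in> I \<Longrightarrow> \<alpha> \<in> K \<Longrightarrow> \<alpha> \<bullet> c i \<ge> 0"
    and orthogonal: "\<And>i \<alpha>. i \<in> I \<Longrightarrow> \<alpha> \<in> J \<Longrightarrow> \<alpha> \<bullet> c i = 0"
    and nonempty: "\<exists>x\<in>P. \<forall>i\<in>I. c i \<bullet> x = d i"
  obtains y where "y \<in> P \<inter> chamber K" "\<And>i. i \<in> I \<Longrightarrow> c i \<bullet> y = d i" "\<And>\<alpha>. \<alpha> \<in> J \<Longrightarrow> y \<bullet> \<alpha> = 0"
proof -
  define E where "E = P \<inter> (\<Inter>i\<in>I. {x. c i \<bullet> x = d i})"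
  have "compact E" unfolding E_def
    by (intro compact_Int_closed compact_P closed_INT closed_hyperplane ballI)
  have "convex E" unfolding E_def by (intro convex_Int convex_P convex_INT convex_hyperplane ballI)
  have refl_E: "refl \<alpha> x \<in> E"
    if "\<alpha> \<in> S" "x \<in> E" "\<And>i. i \<in> I \<Longrightarrow> (x \<bullet> \<alpha>) * (\<alpha> \<bullet> c i) \<le> 0" for \<alpha> x
    using that refl_mem_P refl_stays_on_supporting_hyperplane[OF that(1) supporting]
    by (auto simp: E_def)
  have "E \<inter> chamber K \<noteq> {}"
  proof (rule chamber_meets_if_refl_closed[OF assms(1) \<open>compact E\<close>])
    show "E \<noteq> {}" using nonempty by (auto simp: E_def)
    show "refl \<alpha> x \<in> E" if "\<alpha> \<in> K" "x \<in> E" "x \<bullet> \<alpha> < 0" for \<alpha> x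
    proof (rule refl_E)
      show "\<alpha> \<in> S" "x \<in> E" using that assms(1) by auto
      show "(x \<bullet> \<alpha>) * (\<alpha> \<bullet> c i) \<le> 0" if "i \<in> I" for i
        using nonneg[OF that \<open>\<alpha> \<in> K\<close>] \<open>x \<bullet> \<alpha> < 0\<close> by (simp add: mult_nonpos_nonneg)
    qed
  qed
  moreover have "refl \<alpha> x \<in> E" if "\<alpha> \<in> J" "x \<in> E" for \<alpha> x
    using refl_E[of \<alpha> x] that orthogonal assms(1,2) by auto
  ultimately obtain y where "y \<in> E \<inter> chamber K" "\<And>\<alpha>. \<alpha> \<in> J \<Longrightarrow> y \<bullet> \<alpha> = 0"
    using chamber_point_on_walls[OF assms(1,2) \<open>compact E\<close> \<open>convex E\<close>] by blast
  then show ?thesis using that by (auto simp: E_def)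
qed

lemma meeting_facets_common_point:
  assumes "K \<subseteq> S" "flag_polytope P" "irredundant_hrep P H a b"
    and facet: "\<And>F. F \<in> \<F> \<Longrightarrow> F facet_of (P \<inter> chamber K)"
    and meet: "\<And>F G. F \<in> \<F> \<Longrightarrow> G \<in> \<F> \<Longrightarrow> F \<inter> G \<noteq> {}"
  obtains y where "y \<in> P \<inter> chamber K"
    "\<And>F. F \<in> \<F> \<Longrightarrow> \<forall>\<alpha>\<in>K. \<not> F \<subseteq> {x. x \<bullet> \<alpha> = 0} \<Longrightarrow> y \<in> F"
    "\<And>F \<alpha>. F \<in> \<F> \<Longrightarrow> \<alpha> \<in> K \<Longrightarrow> F \<subseteq> {x. x \<bullet> \<alpha> = 0} \<Longrightarrow> y \<bullet> \<alpha> = 0"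
proof -
  interpret irredundant_hrep P H a b by (rule assms(3))
  define J where "J = {\<alpha>\<in>K. \<exists>F\<in>\<F>. F \<subseteq> {x. x \<bullet> \<alpha> = 0}}"
  define \<G> where "\<G> = {F\<in>\<F>. \<forall>\<alpha>\<in>K. \<not> F \<subseteq> {x. x \<bullet> \<alpha> = 0}}"
  have "\<forall>F\<in>\<G>. \<exists>h\<in>H. F = (P \<inter> chamber K) \<inter> {x. a h \<bullet> x = b h}"
    using facet_of_Int_chamber_cases[OF assms(1,3) facet] by (fastforce simp: \<G>_def)
  then obtain h where h: "\<And>F. F \<in> \<G> \<Longrightarrow> h F \<in> H"
    "\<And>F. F \<in> \<G> \<Longrightarrow> F = (P \<inter> chamber K) \<inter> {x. a (h F) \<bullet> x = b (h F)}"
    by metis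
  obtain y where y: "y \<in> P \<inter> chamber K" "\<And>F. F \<in> \<G> \<Longrightarrow> a (h F) \<bullet> y = b (h F)"
    "\<And>\<alpha>. \<alpha> \<in> J \<Longrightarrow> y \<bullet> \<alpha> = 0"
  proof (rule face_meets_chamber_on_walls[OF assms(1), of J \<G> "a \<circ> h" "b \<circ> h"])
    show "J \<subseteq> K" by (auto simp: J_def)
    show "(a \<circ> h) F \<bullet> x \<le> (b \<circ> h) F" if "F \<in> \<G>" "x \<in> P" for F x
      using le_if_mem h(1) that by simp
    show "\<alpha> \<bullet> (a \<circ> h) F \<ge> 0" if F: "F \<in> \<G>" and \<alpha>: "\<alpha> \<in> K" for F \<alpha>
    proof -
      have "F \<subseteq> P \<inter> chamber {\<alpha>} \<inter> {x. a (h F) \<bullet> x = b (h F)}"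
        using h(2)[OF F] chamber_antimono[of "{\<alpha>}" K] \<alpha> by blast
      moreover have "\<not> F \<subseteq> {x. x \<bullet> \<alpha> = 0}" using F \<alpha> by (simp add: \<G>_def)
      ultimately show ?thesis
        using supporting_normal_root_nonneg[OF _ le_if_mem[OF h(1)[OF F]]] \<alpha> assms(1) by auto
    qed
    show "\<alpha> \<bullet> (a \<circ> h) F = 0" if F: "F \<in> \<G>" and \<alpha>: "\<alpha> \<in> J" for F \<alpha>
    proof -
      obtain F' where "F' \<in> \<F>" "F' \<subseteq> {x. x \<bullet> \<alpha> = 0}" "\<alpha> \<in> K" using \<alpha> by (auto simp: J_def)
      then obtain x where "x \<in> F" "x \<bullet> \<alpha> = 0" using meet[of F F'] F by (auto simp: \<G>_def)
      then have "x \<in> P" "a (h F) \<bullet> x = b (h F)" "x \<bullet> \<alpha> = 0" using h(2)[OF F] by auto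
      then show ?thesis
        using supporting_normal_orthogonal_root[OF _ le_if_mem[OF h(1)[OF F]]] \<open>\<alpha> \<in> K\<close> assms(1)
        by auto
    qed
    have "\<exists>x\<in>P. a (h F) \<bullet> x = b (h F) \<and> a (h G) \<bullet> x = b (h G)" if "F \<in> \<G>" "G \<in> \<G>" for F G
      using meet[of F G] h(2)[OF that(1)] h(2)[OF that(2)] that by (auto simp: \<G>_def)
    then show "\<exists>x\<in>P. \<forall>F\<in>\<G>. (a \<circ> h) F \<bullet> x = (b \<circ> h) F"
      using flag_imp_common_point[OF assms(2), of "h ` \<G>"] h(1) by auto
  qed (auto intro: that)
  show ?thesis
  proof (rule that[OF y(1)])
    show "y \<in> F" if "F \<in> \<F>" "\<forall>\<alpha>\<in>K. \<not> F \<subseteq> {x. x \<bullet> \<alpha> = 0}" for F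
      using that y(1,2) h(2) by (auto simp: \<G>_def)
    show "y \<bullet> \<alpha> = 0" if "F \<in> \<F>" "\<alpha> \<in> K" "F \<subseteq> {x. x \<bullet> \<alpha> = 0}" for F \<alpha>
      using that y(3) by (auto simp: J_def)
  qed
qed

lemma flag_Int_chamber_if_flag:
  assumes "K \<subseteq> S" "flag_polytope P"
  shows "flag_polytope (P \<inter> chamber K)"
  unfolding flag_polytope_def
proof (intro conjI allI impI)
  show "polytope (P \<inter> chamber K)" by (rule polytope_Int_chamber[OF assms(1)])
  fix \<F> assume "\<F> \<subseteq> {F. F facet_of (P \<inter> chamber K)} \<and> (\<forall>F\<in>\<F>. \<forall>G\<in>\<F>. F \<inter> G \<noteq> {})"
  then have facet: "\<And>F. F \<in> \<F> \<Longrightarrow> F facet_of (P \<inter> chamber K)"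
    and meet: "\<And>F G. F \<in> \<F> \<Longrightarrow> G \<in> \<F> \<Longrightarrow> F \<inter> G \<noteq> {}" by auto
  obtain H a b where hrep: "irredundant_hrep P H a b"
    using polyhedron_obtain_irredundant_hrep[OF polyhedron_P full_dim] by blast
  obtain y where y: "y \<in> P \<inter> chamber K"
    "\<And>F. F \<in> \<F> \<Longrightarrow> \<forall>\<alpha>\<in>K. \<not> F \<subseteq> {x. x \<bullet> \<alpha> = 0} \<Longrightarrow> y \<in> F"
    "\<And>F \<alpha>. F \<in> \<F> \<Longrightarrow> \<alpha> \<in> K \<Longrightarrow> F \<subseteq> {x. x \<bullet> \<alpha> = 0} \<Longrightarrow> y \<bullet> \<alpha> = 0"
    using meeting_facets_common_point[OF assms hrep facet meet] by blast
  have "y \<in> F" if F: "F \<in> \<F>" for F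
  proof (cases "\<forall>\<alpha>\<in>K. \<not> F \<subseteq> {x. x \<bullet> \<alpha> = 0}")
    case False
    then obtain \<alpha> where \<alpha>: "\<alpha> \<in> K" "F \<subseteq> {x. x \<bullet> \<alpha> = 0}" by blast
    then have "F = (P \<inter> chamber K) \<inter> {x. x \<bullet> \<alpha> = 0}" by (rule wall_facet_eq[OF assms(1) _ facet[OF F]])
    then show ?thesis using y(1) y(3)[OF F \<alpha>] by blast
  qed (use y(2) F in blast)
  then show "\<Inter> \<F> \<noteq> {}" by blast
qed

end

theorem proposition2p6:
  fixes R S K \<Lambda> :: "'a::euclidean_space set"
  assumes "root_system R"
    and "simple_system R S"
    and "finite \<Lambda>" and "\<Lambda> \<subseteq> chamber S"
    and "K \<subseteq> S"
    and full_dim: "aff_dim (W_polytope S \<Lambda>) = int DIM('a)"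
    and nondeg: "\<forall>v. v extreme_point_of (W_polytope S \<Lambda>) \<longrightarrow> v \<notin> frontier (chamber S)"
  shows "(simple_polytope (W_polytope S \<Lambda>) \<longleftrightarrow>
            simple_polytope (W_polytope S \<Lambda> \<inter> chamber K))
       \<and> (flag_polytope (W_polytope S \<Lambda>) \<longrightarrow>
            flag_polytope (W_polytope S \<Lambda> \<inter> chamber K))"
proof -
  interpret W_symmetric_polytope R S \<Lambda>
    using assms(1-3) full_dim nondeg by unfold_locales auto
  show ?thesis
    using simple_Int_chamber_if_simple[OF assms(5)] simple_if_simple_Int_chamber[OF assms(5)]
      flag_Int_chamber_if_flag[OF assms(5)] by blast
qed

end
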